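(* Let $n\ge 6$ and let $G\in B^{+}_n$. (1) $\mathrm{irr}_t(G)\ge 2n-2$. Equality holds if and only if the degree sequence of $G$ is $(4,2,\ldots,2)$, i.e. one vertex of degree $4$ and $n-1$ vertices of degree $2$. (2) If the degree sequence of $G$ is not $(4,2,\ldots,2)$, then $\mathrm{irr}_t(G)\ge 4n-6$. Equality holds if and only if the degree sequence of $G$ is $(4,3,2,\ldots,2,1)$, i.e. one vertex of degree $4$, one of degree $3$, $n-3$ of degree $2$ and one of degree $1$.
   Context: A bicyclic graph is a simple connected graph whose number of edges equals its number of vertices plus one. For a graph $G=(V,E)$ and $w\in V$, $d_G(w)$ is the degree of $w$. The total irregularity is $\mathrm{irr}_t(G)=\frac12\sum_{x,y\in V}|d_G(x)-d_G(y)|$, where the sum runs over all ordered pairs of vertices. Degree sequences are listed in nonincreasing order. For $p,q\ge 3$ and $l\ge 1$, the $\infty$-graph $\infty(p,q,l)$ is obtained from two vertex-disjoint cycles $C_p$ and $C_q$ by joining a vertex of $C_p$ and a vertex of $C_q$ with a path having $l$ vertices (i.e. length $l-1$). When $l=1$ the two vertices are identified, so the cycles share exactly one vertex. $B^{+}_n$ denotes the set of bicyclic graphs on $n$ vertices obtained from some $\infty(p,q,1)$ by attaching trees. Equivalently, these are the bicyclic graphs on $n$ vertices whose two cycles share exactly one vertex. *)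

theory Defs
  imports Complex_Main "HOL-Library.Multiset"
begin

definition simple_graph :: "'a set \<Rightarrow> 'a set set \<Rightarrow> bool" where
  "simple_graph V E \<longleftrightarrow> finite V \<and> (\<forall>e\<in>E. e \<subseteq> V \<and> card e = 2)"

definition adj :: "'a set set \<Rightarrow> 'a \<Rightarrow> 'a \<Rightarrow> bool" where
  "adj E u v \<longleftrightarrow> {u, v} \<in> E"

definition connected_graph :: "'a set \<Rightarrow> 'a set set \<Rightarrow> bool" where
  "connected_graph V E \<longleftrightarrow> V \<noteq> {} \<and> (\<forall>u\<in>V. \<forall>v\<in>V. (adj E)\<^sup>*\<^sup>* u v)"

definition degree :: "'a set set \<Rightarrow> 'a \<Rightarrow> nat" where
  "degree E w = card {e \<in> E. w \<in> e}"

definition bicyclic :: "'a set \<Rightarrow> 'a set set \<Rightarrow> bool" where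
  "bicyclic V E \<longleftrightarrow> simple_graph V E \<and> connected_graph V E \<and> card E = card V + 1"

definition is_cycle :: "'a set set \<Rightarrow> 'a list \<Rightarrow> bool" where
  "is_cycle E cs \<longleftrightarrow> length cs \<ge> 3 \<and> distinct cs \<and>
     (\<forall>i < length cs. {cs ! i, cs ! ((i + 1) mod length cs)} \<in> E)"

text \<open>B^+_n (with n = card V): bicyclic graphs whose two cycles share exactly one vertex.\<close>
definition B_plus :: "'a set \<Rightarrow> 'a set set \<Rightarrow> bool" where
  "B_plus V E \<longleftrightarrow> bicyclic V E \<and>
     (\<exists>c1 c2. is_cycle E c1 \<and> is_cycle E c2 \<and> card (set c1 \<inter> set c2) = 1)"

definition total_irregularity :: "'a set \<Rightarrow> 'a set set \<Rightarrow> real" where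
  "total_irregularity V E =
     (1/2) * (\<Sum>x\<in>V. \<Sum>y\<in>V. \<bar>real (degree E x) - real (degree E y)\<bar>)"

text \<open>Degree sequence as a multiset (the nonincreasing list is its sorted form).\<close>
definition degree_seq :: "'a set \<Rightarrow> 'a set set \<Rightarrow> nat multiset" where
  "degree_seq V E = image_mset (degree E) (mset_set V)"

end

theory Submission
  imports Defs
begin

text \<open>Only the degrees matter. In a bicyclic graph on \<open>n\<close> vertices the degrees are
  positive and sum to \<open>2n + 2\<close>, and the vertex shared by the two cycles has degree at least 4.
  Let \<open>a\<^sub>t\<close> be the number of vertices of degree greater than \<open>t\<close>; then \<open>a\<^sub>0 = n\<close>,
  \<open>\<Sum>\<^sub>t a\<^sub>t = 2n + 2\<close>, and by the layer-cake principle the total irregularity is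
  \<open>\<Sum>\<^sub>t a\<^sub>t (n - a\<^sub>t)\<close>. If some degree exceeds 4, the terms \<open>t = 1, \<dots>, 4\<close> each
  contribute at least \<open>n - 1\<close>. Otherwise only \<open>a\<^sub>1 \<ge> a\<^sub>2 \<ge> a\<^sub>3 \<ge> 1\<close> with
  \<open>a\<^sub>1 + a\<^sub>2 + a\<^sub>3 = n + 2\<close> remain, and the three possibilities \<open>a\<^sub>1 = n\<close>,
  \<open>a\<^sub>1 = n - 1\<close>, \<open>a\<^sub>1 \<le> n - 2\<close> give the degree sequence \<open>(4,2,\<dots>,2)\<close>, the degree
  sequence \<open>(4,3,2,\<dots>,2,1)\<close>, and the bound \<open>5n - 9\<close>, respectively.\<close>

lemma simple_graph_finite_edges: "simple_graph V E \<Longrightarrow> finite E"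
  unfolding simple_graph_def by (meson Pow_iff finite_Pow_iff finite_subset subsetI)

lemma sum_degree_eq_twice_card_edges:
  assumes "simple_graph V E"
  shows "sum (degree E) V = 2 * card E"
  unfolding degree_def
proof (rule sum_multicount)
  show "finite V" "finite E"
    using assms simple_graph_finite_edges unfolding simple_graph_def by auto
  show "\<forall>e\<in>E. card {x\<in>V. x \<in> e} = 2"
  proof
    fix e assume "e \<in> E"
    then have "e \<subseteq> V" "card e = 2" using assms unfolding simple_graph_def by auto
    then show "card {x\<in>V. x \<in> e} = 2" by (simp add: Int_absorb1 Collect_mem_eq flip: Int_def)
  qed
qed

lemma connected_graph_degree_pos:
  assumes "simple_graph V E" "connected_graph V E" "2 \<le> card V" "x \<in> V"
  shows "1 \<le> degree E x"
proof -
  have "card (V - {x}) \<noteq> 0" using assms(3,4) by (simp add: card_Diff_singleton)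
  then obtain y where "y \<in> V - {x}" by (metis all_not_in_conv card.empty)
  then have "y \<in> V" "y \<noteq> x" by auto
  then have "(adj E)\<^sup>*\<^sup>* x y" using assms(2,4) unfolding connected_graph_def by blast
  then obtain z where "{x, z} \<in> E"
    by (cases rule: converse_rtranclpE) (use \<open>y \<noteq> x\<close> in \<open>auto simp: adj_def\<close>)
  then have "{e\<in>E. x \<in> e} \<noteq> {}" by blast
  moreover have "finite {e\<in>E. x \<in> e}" using simple_graph_finite_edges[OF assms(1)] by simp
  ultimately show ?thesis unfolding degree_def by (simp add: Suc_le_eq card_gt_0_iff)
qed

lemma is_cycle_two_neighbours:
  assumes "is_cycle E cs" "v \<in> set cs"
  obtains a b where "a \<noteq> b" "a \<in> set cs - {v}" "b \<in> set cs - {v}" "{v, a} \<in> E" "{v, b} \<in> E"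
proof -
  let ?L = "length cs"
  obtain i where i: "i < ?L" "cs ! i = v" using assms(2) by (metis in_set_conv_nth)
  have L3: "3 \<le> ?L" and dist: "distinct cs"
    and edge: "\<And>j. j < ?L \<Longrightarrow> {cs ! j, cs ! ((j + 1) mod ?L)} \<in> E"
    using assms(1) unfolding is_cycle_def by auto
  define p where "p = (if i + 1 < ?L then i + 1 else 0)"
  define q where "q = (if i = 0 then ?L - 1 else i - 1)"
  have "i + 1 < ?L \<or> i + 1 = ?L" using i(1) by linarith
  then have succ: "(i + 1) mod ?L = p" unfolding p_def by auto
  have pred: "(q + 1) mod ?L = i" using i(1) L3 unfolding q_def by auto
  have pq: "p < ?L" "q < ?L" "p \<noteq> i" "q \<noteq> i" "p \<noteq> q"
    using i(1) L3 unfolding p_def q_def by auto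
  show thesis
  proof (rule that[of "cs ! p" "cs ! q"])
    show "cs ! p \<noteq> cs ! q" "cs ! p \<in> set cs - {v}" "cs ! q \<in> set cs - {v}"
      using pq i dist by (auto simp: nth_eq_iff_index_eq)
    show "{v, cs ! p} \<in> E" using edge[OF i(1)] succ i(2) by simp
    show "{v, cs ! q} \<in> E" using edge[OF pq(2)] pred i(2) by (simp add: insert_commute)
  qed
qed

lemma common_cycle_vertex_degree:
  assumes "simple_graph V E" "is_cycle E c1" "is_cycle E c2" "set c1 \<inter> set c2 = {w}"
  shows "w \<in> V" and "4 \<le> degree E w"
proof -
  obtain a b where ab: "a \<noteq> b" "a \<in> set c1 - {w}" "b \<in> set c1 - {w}" "{w, a} \<in> E" "{w, b} \<in> E"
    using is_cycle_two_neighbours[OF assms(2)] assms(4) by blast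
  obtain c d where cd: "c \<noteq> d" "c \<in> set c2 - {w}" "d \<in> set c2 - {w}" "{w, c} \<in> E" "{w, d} \<in> E"
    using is_cycle_two_neighbours[OF assms(3)] assms(4) by blast
  show "w \<in> V" using ab(4) assms(1) unfolding simple_graph_def by blast
  have "card {{w, a}, {w, b}, {w, c}, {w, d}} = 4"
  proof -
    have "a \<noteq> c" "a \<noteq> d" "b \<noteq> c" "b \<noteq> d" using ab cd assms(4) by blast+
    then show ?thesis using ab cd by (simp add: doubleton_eq_iff)
  qed
  moreover have "{{w, a}, {w, b}, {w, c}, {w, d}} \<subseteq> {e\<in>E. w \<in> e}" using ab cd by auto
  moreover have "finite {e\<in>E. w \<in> e}" using simple_graph_finite_edges[OF assms(1)] by simp
  ultimately show "4 \<le> degree E w" unfolding degree_def by (metis card_mono)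
qed

lemma count_image_mset_mset_set:
  assumes "finite V"
  shows "count (image_mset f (mset_set V)) k = card {x\<in>V. f x = k}"
proof -
  have "f -` {k} \<inter> V = {x\<in>V. f x = k}" by auto
  then show ?thesis using assms by (simp add: count_image_mset)
qed

lemma abs_diff_eq_card_separating_thresholds:
  assumes "p \<le> M" "q \<le> M"
  shows "\<bar>real p - real q\<bar> = real (card {t\<in>{..<M}. (t < p) \<noteq> (t < q)})"
proof -
  have "{t\<in>{..<M}. (t < p) \<noteq> (t < q)} = {min p q..<max p q}"
    using assms by auto
  then show ?thesis by (simp add: of_nat_diff)
qed

lemma sum_eq_sum_card_thresholds:
  assumes "finite V" "\<And>x. x \<in> V \<Longrightarrow> f x \<le> M"
  shows "sum f V = (\<Sum>t<M. card {x\<in>V. t < f x})"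
proof -
  have "card {t\<in>{..<M}. t < f x} = f x" if "x \<in> V" for x
  proof -
    have "{t\<in>{..<M}. t < f x} = {..<f x}" using assms(2)[OF that] by auto
    then show ?thesis by simp
  qed
  then show ?thesis
    by (simp add: sum_multicount_gen[of "{..<M}" V "\<lambda>t x. t < f x" f] assms(1))
qed

lemma sum_card_separated:
  assumes "finite V"
  shows "(\<Sum>x\<in>V. card {y\<in>V. P x \<noteq> P y}) = 2 * (card {x\<in>V. P x} * card {x\<in>V. \<not> P x})"
proof -
  have "(\<Sum>x\<in>V. card {y\<in>V. P x \<noteq> P y})
      = (\<Sum>x\<in>V. if P x then card {y\<in>V. \<not> P y} else card {y\<in>V. P y})"
    by (rule sum.cong) auto
  also have "\<dots> = card {x\<in>V. P x} * card {x\<in>V. \<not> P x} + card {x\<in>V. \<not> P x} * card {x\<in>V. P x}"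
    using assms by (simp add: sum.If_cases Int_def conj_commute)
  finally show ?thesis by simp
qed

lemma sum_abs_diff_layer_cake:
  assumes "finite V" "\<And>x. x \<in> V \<Longrightarrow> f x \<le> M"
  shows "(\<Sum>x\<in>V. \<Sum>y\<in>V. \<bar>real (f x) - real (f y)\<bar>)
       = 2 * real (\<Sum>t<M. card {x\<in>V. t < f x} * card {x\<in>V. \<not> t < f x})"
proof -
  have swap: "(\<Sum>y\<in>V. card {t\<in>{..<M}. (t < f x) \<noteq> (t < f y)})
      = (\<Sum>t<M. card {y\<in>V. (t < f x) \<noteq> (t < f y)})" for x
    using assms(1) by (rule sum_multicount_gen) auto
  have "(\<Sum>x\<in>V. \<Sum>y\<in>V. \<bar>real (f x) - real (f y)\<bar>)
      = (\<Sum>x\<in>V. \<Sum>y\<in>V. real (card {t\<in>{..<M}. (t < f x) \<noteq> (t < f y)}))"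
    using assms(2) by (intro sum.cong refl abs_diff_eq_card_separating_thresholds) auto
  also have "\<dots> = real (\<Sum>x\<in>V. \<Sum>t<M. card {y\<in>V. (t < f x) \<noteq> (t < f y)})"
    by (simp only: swap flip: of_nat_sum)
  also have "\<dots> = real (\<Sum>t<M. \<Sum>x\<in>V. card {y\<in>V. (t < f x) \<noteq> (t < f y)})"
    by (simp only: sum.swap[of _ V])
  also have "\<dots> = real (\<Sum>t<M. 2 * (card {x\<in>V. t < f x} * card {x\<in>V. \<not> t < f x}))"
    by (simp only: sum_card_separated[OF assms(1)])
  finally show ?thesis by (simp add: sum_distrib_left)
qed

lemma pred_le_mult_diff:
  fixes x n :: nat
  assumes "1 \<le> x" "x + 1 \<le> n"
  shows "n - 1 \<le> x * (n - x)"
proof -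
  obtain y z where "x = y + 1" "n = x + 1 + z"
    using assms by (metis add.commute le_Suc_ex Suc_eq_plus1_left le_add_diff_inverse)
  then show ?thesis by (simp add: algebra_simps)
qed

lemma double_le_mult_diff:
  fixes x n :: nat
  assumes "2 \<le> x" "x + 2 \<le> n"
  shows "2 * (n - 2) \<le> x * (n - x)"
proof -
  obtain y z where "x = y + 2" "n = x + 2 + z"
    using assms by (metis add.commute le_add_diff_inverse)
  then show ?thesis by (simp add: algebra_simps)
qed

lemma decreasing_triple_cases:
  fixes n p q r :: nat
  assumes "r \<le> q" "q \<le> p" "p \<le> n" "1 \<le> r" "p + q + r = n + 2"
  obtains "p = n" "q = 1" "r = 1" | "p + 1 = n" "q = 2" "r = 1" | "p + 2 \<le> n" "2 \<le> q"
  using assms by linarith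

lemma triple_mult_diff_lower_bound:
  fixes n p q r :: nat
  assumes "1 \<le> r" "r \<le> q" "2 \<le> q" "q \<le> p" "p + 2 \<le> n"
  shows "5 * n \<le> p * (n - p) + q * (n - q) + r * (n - r) + 9"
proof -
  have "2 * (n - 2) \<le> p * (n - p)" "2 * (n - 2) \<le> q * (n - q)"
    using assms by (auto intro: double_le_mult_diff)
  moreover have "n - 1 \<le> r * (n - r)" using assms by (intro pred_le_mult_diff) auto
  ultimately show ?thesis using assms by linarith
qed

locale bicyclic_degree_profile =
  fixes V :: "'a set" and E :: "'a set set" and n :: nat
  assumes finite_V: "finite V" and card_V: "card V = n"
    and degree_pos: "\<And>x. x \<in> V \<Longrightarrow> 1 \<le> degree E x"
    and sum_degree: "sum (degree E) V = 2 * n + 2"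
    and high_degree_vertex: "\<exists>w\<in>V. 4 \<le> degree E w"
begin

definition above :: "nat \<Rightarrow> nat" where
  "above t = card {x\<in>V. t < degree E x}"

lemma degree_le: "x \<in> V \<Longrightarrow> degree E x \<le> 2 * n + 2"
  using member_le_sum[of x V "degree E"] finite_V sum_degree by simp

lemma above_antimono: "s \<le> t \<Longrightarrow> above t \<le> above s"
  unfolding above_def using finite_V by (intro card_mono) auto

lemma above_le: "above t \<le> n"
  unfolding above_def card_V[symmetric] using finite_V by (intro card_mono) auto

lemma above_0: "above 0 = n"
proof -
  have "{x\<in>V. 0 < degree E x} = V" using degree_pos by fastforce
  then show ?thesis unfolding above_def using card_V by simp
qed

lemma above_pos_iff: "1 \<le> above t \<longleftrightarrow> (\<exists>x\<in>V. t < degree E x)"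
  unfolding above_def using finite_V by (auto simp: Suc_le_eq card_gt_0_iff)

lemma above_3_pos: "1 \<le> above 3"
  using above_pos_iff[of 3] high_degree_vertex by fastforce

lemma sum_above:
  assumes "\<And>x. x \<in> V \<Longrightarrow> degree E x \<le> M"
  shows "(\<Sum>t<M. above t) = 2 * n + 2"
  unfolding above_def sum_degree[symmetric] using finite_V assms
  by (rule sum_eq_sum_card_thresholds[symmetric])

lemma total_irregularity_eq:
  assumes "\<And>x. x \<in> V \<Longrightarrow> degree E x \<le> M"
  shows "total_irregularity V E = real (\<Sum>t<M. above t * (n - above t))"
proof -
  have "card {x\<in>V. \<not> t < degree E x} = n - card {x\<in>V. t < degree E x}" for t
  proof -
    have "{x\<in>V. \<not> t < degree E x} = V - {x\<in>V. t < degree E x}" by blast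
    then show ?thesis unfolding card_V[symmetric] using finite_V by (simp add: card_Diff_subset)
  qed
  moreover have "total_irregularity V E
      = 1 / 2 * (2 * real (\<Sum>t<M. card {x\<in>V. t < degree E x} * card {x\<in>V. \<not> t < degree E x}))"
    unfolding total_irregularity_def by (rule arg_cong[OF sum_abs_diff_layer_cake[OF finite_V assms]])
  ultimately show ?thesis unfolding above_def by simp
qed

lemma count_degree_seq_Suc: "count (degree_seq V E) (Suc k) = above k - above (Suc k)"
proof -
  have "{x\<in>V. k < degree E x} = {x\<in>V. degree E x = Suc k} \<union> {x\<in>V. Suc k < degree E x}"
    "{x\<in>V. degree E x = Suc k} \<inter> {x\<in>V. Suc k < degree E x} = {}"
    by auto
  then have "above k = card {x\<in>V. degree E x = Suc k} + above (Suc k)"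
    unfolding above_def using finite_V by (simp add: card_Un_disjoint)
  then show ?thesis
    unfolding degree_seq_def count_image_mset_mset_set[OF finite_V] by simp
qed

lemma degree_seq_if_max_degree_4:
  assumes "\<And>x. x \<in> V \<Longrightarrow> degree E x \<le> 4"
  shows "degree_seq V E = replicate_mset (n - above 1) 1 + replicate_mset (above 1 - above 2) 2
    + replicate_mset (above 2 - above 3) 3 + replicate_mset (above 3) 4"
    (is "_ = ?D")
proof (rule multiset_eqI)
  fix k
  have above_4: "above t = 0" if "4 \<le> t" for t
    using above_pos_iff[of t] assms that by fastforce
  have "{x\<in>V. degree E x = 0} = {}" using degree_pos by fastforce
  then have count_0: "count (degree_seq V E) 0 = 0"
    unfolding degree_seq_def count_image_mset_mset_set[OF finite_V] by (simp only: card.empty)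
  consider "k = 0" | "k = Suc 0" | "k = Suc 1" | "k = Suc 2" | "k = Suc 3" | j where "k = Suc j" "4 \<le> j"
    by atomize_elim presburger
  then show "count (degree_seq V E) k = count ?D k"
    by cases (simp_all add: count_0 count_degree_seq_Suc above_0 above_4 numeral_eq_Suc)
qed

lemma irregularity_if_degree_above_4:
  assumes "x \<in> V" "4 < degree E x"
  shows "above 1 < n" and "4 * real n - 4 \<le> total_irregularity V E"
proof -
  define M where "M = 2 * n + 2"
  have bounded: "\<And>y. y \<in> V \<Longrightarrow> degree E y \<le> M" unfolding M_def by (rule degree_le)
  have "5 \<le> M" using bounded[OF assms(1)] assms(2) by simp
  have above: "1 \<le> above 4" "above 4 \<le> above 3" "above 3 \<le> above 2" "above 2 \<le> above 1"
    using above_pos_iff[of 4] assms above_antimono by auto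
  have "(\<Sum>t<5. above t) \<le> (\<Sum>t<M. above t)"
    using \<open>5 \<le> M\<close> by (intro sum_mono2) auto
  then have "n + above 1 + above 2 + above 3 + above 4 \<le> 2 * n + 2"
    using sum_above[OF bounded] by (simp add: numeral_eq_Suc above_0)
  then show "above 1 < n" using above by linarith
  then have "n - 1 \<le> above t * (n - above t)" if "1 \<le> t" "t \<le> 4" for t
    using above_antimono[of 1 t] above_antimono[of t 4] above(1) that
    by (intro pred_le_mult_diff) auto
  then have "4 * (n - 1) \<le> (\<Sum>t\<in>{1..4}. above t * (n - above t))"
    using sum_bounded_below[of "{1..4::nat}" "n - 1"] by simp
  also have "\<dots> \<le> (\<Sum>t<M. above t * (n - above t))"
    using \<open>5 \<le> M\<close> by (intro sum_mono2) auto
  finally have "real (4 * (n - 1)) \<le> real (\<Sum>t<M. above t * (n - above t))"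
    by (rule of_nat_mono)
  also have "\<dots> = total_irregularity V E"
    by (rule total_irregularity_eq[OF bounded, symmetric])
  finally show "4 * real n - 4 \<le> total_irregularity V E"
    using \<open>above 1 < n\<close> by (simp add: of_nat_diff)
qed

lemma irregularity_if_max_degree_4:
  assumes "\<And>x. x \<in> V \<Longrightarrow> degree E x \<le> 4"
  shows "above 1 + above 2 + above 3 = n + 2"
    and "total_irregularity V E = real (above 1 * (n - above 1) + above 2 * (n - above 2)
      + above 3 * (n - above 3))"
  using sum_above[OF assms] total_irregularity_eq[OF assms]
  by (simp_all add: numeral_eq_Suc above_0)

theorem total_irregularity_bounds:
  assumes "6 \<le> n"
  shows "total_irregularity V E \<ge> 2 * real n - 2
     \<and> (total_irregularity V E = 2 * real n - 2 \<longleftrightarrow>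
          degree_seq V E = {#4#} + replicate_mset (n - 1) 2)
     \<and> (degree_seq V E \<noteq> {#4#} + replicate_mset (n - 1) 2 \<longrightarrow>
          total_irregularity V E \<ge> 4 * real n - 6
          \<and> (total_irregularity V E = 4 * real n - 6 \<longleftrightarrow>
               degree_seq V E = {#4, 3, 1#} + replicate_mset (n - 3) 2))"
proof (cases "\<forall>x\<in>V. degree E x \<le> 4")
  case False
  then obtain x where x: "x \<in> V" "4 < degree E x" by (auto simp: not_le)
  have "degree E x \<in># degree_seq V E" unfolding degree_seq_def using finite_V x(1) by simp
  then have "degree_seq V E \<noteq> {#4#} + replicate_mset (n - 1) 2"
    "degree_seq V E \<noteq> {#4, 3, 1#} + replicate_mset (n - 3) 2"
    using x(2) by (auto split: if_splits)
  then show ?thesis using irregularity_if_degree_above_4[OF x] assms by auto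
next
  case True
  let ?p = "above 1" and ?q = "above 2" and ?r = "above 3"
  have max_4: "\<And>x. x \<in> V \<Longrightarrow> degree E x \<le> 4" using True by blast
  note irr = irregularity_if_max_degree_4[OF max_4]
  note seq = degree_seq_if_max_degree_4[OF max_4]
  have "?r \<le> ?q" "?q \<le> ?p" by (simp_all add: above_antimono)
  then consider "?p = n" "?q = 1" "?r = 1" | "?p + 1 = n" "?q = 2" "?r = 1" | "?p + 2 \<le> n" "2 \<le> ?q"
    using decreasing_triple_cases above_le above_3_pos irr(1) by metis
  then show ?thesis
  proof cases
    case 1
    have "total_irregularity V E = 2 * real n - 2"
      using assms 1 by (simp add: irr(2) of_nat_diff)
    moreover have "degree_seq V E = {#4#} + replicate_mset (n - 1) 2"
      using 1 by (simp add: seq)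
    ultimately show ?thesis by simp
  next
    case 2
    then have p: "?p = n - 1" by simp
    with 2 assms have "total_irregularity V E = 4 * real n - 6"
      by (simp add: irr(2) of_nat_diff)
    moreover have "degree_seq V E = {#4, 3, 1#} + replicate_mset (n - 3) 2"
      using 2 p assms by (simp add: seq add_mset_commute numeral_eq_Suc)
    ultimately show ?thesis using assms by (auto dest: arg_cong[of _ _ "\<lambda>M. count M 1"])
  next
    case 3
    then have "5 * n \<le> ?p * (n - ?p) + ?q * (n - ?q) + ?r * (n - ?r) + 9"
      using above_3_pos \<open>?r \<le> ?q\<close> \<open>?q \<le> ?p\<close> by (intro triple_mult_diff_lower_bound)
    then have "real (5 * n) \<le> real (?p * (n - ?p) + ?q * (n - ?q) + ?r * (n - ?r) + 9)"
      by (rule of_nat_mono)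
    then have "5 * real n \<le> total_irregularity V E + 9" by (simp add: irr(2))
    moreover have "2 \<le> count (degree_seq V E) 1" using 3 by (simp add: seq)
    ultimately show ?thesis using assms by auto
  qed
qed

end

theorem theorem12:
  fixes V :: "'a set" and E :: "'a set set" and n :: nat
  assumes "B_plus V E" and "card V = n" and "n \<ge> 6"
  shows "total_irregularity V E \<ge> 2 * real n - 2
     \<and> (total_irregularity V E = 2 * real n - 2 \<longleftrightarrow>
          degree_seq V E = {#4#} + replicate_mset (n - 1) 2)
     \<and> (degree_seq V E \<noteq> {#4#} + replicate_mset (n - 1) 2 \<longrightarrow>
          total_irregularity V E \<ge> 4 * real n - 6
          \<and> (total_irregularity V E = 4 * real n - 6 \<longleftrightarrow>
               degree_seq V E = {#4, 3, 1#} + replicate_mset (n - 3) 2))"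
proof -
  obtain c1 c2 where "bicyclic V E"
    and cycles: "is_cycle E c1" "is_cycle E c2" "card (set c1 \<inter> set c2) = 1"
    using assms(1) unfolding B_plus_def by blast
  then have graph: "simple_graph V E" "connected_graph V E" and card_E: "card E = n + 1"
    using assms(2) unfolding bicyclic_def by auto
  obtain w where "set c1 \<inter> set c2 = {w}" using cycles(3) card_1_singletonE by blast
  note w = common_cycle_vertex_degree[OF graph(1) cycles(1,2) this]
  interpret bicyclic_degree_profile V E n
  proof
    show "finite V" using graph(1) unfolding simple_graph_def by simp
    show "card V = n" by (fact assms(2))
    show "sum (degree E) V = 2 * n + 2"
      using sum_degree_eq_twice_card_edges[OF graph(1)] card_E by simp
    show "\<exists>w\<in>V. 4 \<le> degree E w" using w by blast
    show "1 \<le> degree E x" if "x \<in> V" for x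
      using connected_graph_degree_pos[OF graph] assms(2,3) that by simp
  qed
  show ?thesis by (rule total_irregularity_bounds[OF assms(3)])
qed

end
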